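(* Let $G$ be a finite graph with $n$ vertices given together with an RDV representation (rooted host tree $T$). Let $v_1,\dots,v_n$ be any bottom-up enumeration of the vertices of $G$ with respect to this representation. Then the greedy matching algorithm, run on $G$ with vertex order $v_1,\dots,v_n$, returns a maximum matching of $G$, i.e., a matching of largest possible cardinality.
   Context: An RDV representation of a graph $G$ consists of a rooted tree $T$ (the host tree; its vertices are called nodes) and, for every vertex $v$ of $G$, a downward path $P(v)$ in $T$ (a path that starts at some node and then always proceeds from a node to one of its children), such that for distinct vertices $v,w$, $vw$ is an edge of $G$ if and only if $P(v)$ and $P(w)$ share at least one node. For a vertex $v$, $t(v)$ denotes the node of $P(v)$ closest to the root, and $b(v)$ the node of $P(v)$ farthest from the root. A bottom-up enumeration is an ordering of the vertices of $G$ by non-increasing distance of $t(v)$ from the root of $T$ (ties broken arbitrarily). The greedy matching algorithm with vertex order $v_1,\dots,v_n$: start with $M=\emptyset$; for $i=1,\dots,n$, if $v_i$ is not yet matched (not an endpoint of an edge of $M$) and has at least one unmatched neighbour, then among its unmatched neighbours choose the one $v_j$ with smallest index $j$ and add the edge $v_iv_j$ to $M$; finally return $M$. *)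

theory Defs
  imports Main
begin

definition rooted_tree :: "'n set \<Rightarrow> 'n \<Rightarrow> ('n \<Rightarrow> 'n) \<Rightarrow> bool" where
  "rooted_tree N r par \<longleftrightarrow> finite N \<and> r \<in> N \<and> par r = r \<and>
     (\<forall>x\<in>N. par x \<in> N) \<and> (\<forall>x\<in>N. \<exists>k. (par ^^ k) x = r)"

definition depth :: "'n \<Rightarrow> ('n \<Rightarrow> 'n) \<Rightarrow> 'n \<Rightarrow> nat" where
  "depth r par x = (LEAST k. (par ^^ k) x = r)"

definition downward_path :: "'n set \<Rightarrow> ('n \<Rightarrow> 'n) \<Rightarrow> 'n list \<Rightarrow> bool" where
  "downward_path N par p \<longleftrightarrow> p \<noteq> [] \<and> set p \<subseteq> N \<and>
     (\<forall>i. Suc i < length p \<longrightarrow> par (p ! Suc i) = p ! i \<and> p ! Suc i \<noteq> p ! i)"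

definition rdv_rep :: "'a set \<Rightarrow> ('a \<Rightarrow> 'a \<Rightarrow> bool) \<Rightarrow> 'n set \<Rightarrow> 'n \<Rightarrow> ('n \<Rightarrow> 'n)
    \<Rightarrow> ('a \<Rightarrow> 'n list) \<Rightarrow> bool" where
  "rdv_rep V adj N r par P \<longleftrightarrow> rooted_tree N r par \<and>
     (\<forall>v\<in>V. downward_path N par (P v)) \<and>
     (\<forall>v\<in>V. \<forall>w\<in>V. v \<noteq> w \<longrightarrow> (adj v w \<longleftrightarrow> set (P v) \<inter> set (P w) \<noteq> {}))"

text \<open>t(v) is the top node of P(v), i.e. the head of the list.\<close>
definition bottom_up_enum :: "'a set \<Rightarrow> 'n \<Rightarrow> ('n \<Rightarrow> 'n) \<Rightarrow> ('a \<Rightarrow> 'n list) \<Rightarrow> 'a list \<Rightarrow> bool" where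
  "bottom_up_enum V r par P vs \<longleftrightarrow> distinct vs \<and> set vs = V \<and>
     (\<forall>i j. i < j \<longrightarrow> j < length vs \<longrightarrow>
        depth r par (hd (P (vs ! j))) \<le> depth r par (hd (P (vs ! i))))"

definition is_matching :: "'a set \<Rightarrow> ('a \<Rightarrow> 'a \<Rightarrow> bool) \<Rightarrow> 'a set set \<Rightarrow> bool" where
  "is_matching V adj M \<longleftrightarrow>
     (\<forall>e\<in>M. \<exists>u v. e = {u, v} \<and> u \<in> V \<and> v \<in> V \<and> u \<noteq> v \<and> adj u v) \<and>
     (\<forall>e1\<in>M. \<forall>e2\<in>M. e1 \<noteq> e2 \<longrightarrow> e1 \<inter> e2 = {})"

definition is_max_matching :: "'a set \<Rightarrow> ('a \<Rightarrow> 'a \<Rightarrow> bool) \<Rightarrow> 'a set set \<Rightarrow> bool" where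
  "is_max_matching V adj M \<longleftrightarrow> is_matching V adj M \<and>
     (\<forall>M'. is_matching V adj M' \<longrightarrow> card M' \<le> card M)"

text \<open>Greedy matching. Since the order is a distinct list, the first element of the
  order satisfying the predicate is the unmatched neighbour of smallest index.\<close>
fun greedy_aux :: "('a \<Rightarrow> 'a \<Rightarrow> bool) \<Rightarrow> 'a list \<Rightarrow> 'a list \<Rightarrow> 'a set set \<Rightarrow> 'a set set" where
  "greedy_aux adj order [] M = M"
| "greedy_aux adj order (v # rest) M =
     greedy_aux adj order rest
       (if v \<in> \<Union>M then M
        else (case find (\<lambda>w. w \<noteq> v \<and> adj v w \<and> w \<notin> \<Union>M) order of
                None \<Rightarrow> M
              | Some w \<Rightarrow> insert {v, w} M))"

definition greedy_matching :: "('a \<Rightarrow> 'a \<Rightarrow> bool) \<Rightarrow> 'a list \<Rightarrow> 'a set set" where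
  "greedy_matching adj vs = greedy_aux adj vs vs {}"

end

theory Submission
  imports Defs
begin

text \<open>We show that after each step the greedy matching extends some maximum matching that
  agrees with it at every vertex processed so far. When the current vertex \<open>v\<close> takes its
  first free neighbour \<open>w\<close> while the maximum matching uses edges \<open>vu\<close> and \<open>wx\<close>, the bottom-up
  order gives \<open>depth t(u) \<le> depth t(w) \<le> depth t(v)\<close> and \<open>depth t(x) \<le> depth t(v)\<close>. Then
  \<open>t(v)\<close> lies on \<open>P(u)\<close> and \<open>P(w)\<close>, and the path \<open>P(x)\<close>, which meets \<open>P(w)\<close>, also meets
  \<open>P(u)\<close>; so \<open>ux\<close> is an edge and \<open>{vw, ux}\<close> can replace \<open>{vu, wx}\<close>.\<close>

lemma depth_eq:
  assumes T: "rooted_tree N r par" and x: "x \<in> N"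
  shows "depth r par x = (if x = r then 0 else Suc (depth r par (par x)))"
proof (cases "x = r")
  case True
  then show ?thesis unfolding depth_def by (simp add: Least_eq_0)
next
  case False
  obtain k where k: "(par ^^ k) x = r" using T x unfolding rooted_tree_def by blast
  have "(LEAST k. (par ^^ k) x = r) = Suc (LEAST m. (par ^^ Suc m) x = r)"
    by (rule Least_Suc[where P="\<lambda>k. (par ^^ k) x = r", OF k]) (use False in simp)
  also have "(\<lambda>m. (par ^^ Suc m) x = r) = (\<lambda>m. (par ^^ m) (par x) = r)"
    by (simp add: funpow_Suc_right del: funpow.simps)
  finally show ?thesis using False unfolding depth_def by simp
qed

lemma depth_root: "depth r par r = 0"
  unfolding depth_def by (simp add: Least_eq_0)

lemma funpow_parent_in:
  "rooted_tree N r par \<Longrightarrow> x \<in> N \<Longrightarrow> (par ^^ k) x \<in> N"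
  by (induction k) (auto simp: rooted_tree_def)

lemma depth_funpow_parent:
  assumes T: "rooted_tree N r par" and x: "x \<in> N"
  shows "depth r par ((par ^^ k) x) = depth r par x - k"
proof (induction k)
  case 0
  then show ?case by simp
next
  case (Suc k)
  define y where "y = (par ^^ k) x"
  have "depth r par (par y) = depth r par y - 1"
    using depth_eq[OF T funpow_parent_in[OF T x]] depth_root T
    by (cases "y = r") (auto simp: y_def rooted_tree_def)
  then show ?case using Suc by (simp add: y_def)
qed

lemma funpow_parent_eq_root:
  assumes T: "rooted_tree N r par" and x: "x \<in> N" and k: "depth r par x \<le> k"
  shows "(par ^^ k) x = r"
proof -
  obtain k0 where "(par ^^ k0) x = r" using T x unfolding rooted_tree_def by blast
  then have root: "(par ^^ depth r par x) x = r" unfolding depth_def by (rule LeastI)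
  have "(par ^^ k) x = (par ^^ (k - depth r par x)) ((par ^^ depth r par x) x)"
    using k by (simp flip: funpow_add[THEN fun_cong, simplified])
  moreover have "(par ^^ m) r = r" for m
    using T by (induction m) (auto simp: rooted_tree_def)
  ultimately show ?thesis using root by metis
qed

lemma ancestor_eq_if_depth_eq:
  assumes T: "rooted_tree N r par" and y: "y \<in> N"
    and eq: "depth r par ((par ^^ i) y) = depth r par ((par ^^ j) y)"
  shows "(par ^^ i) y = (par ^^ j) y"
proof (cases "i \<le> depth r par y \<and> j \<le> depth r par y")
  case True
  then show ?thesis using eq depth_funpow_parent[OF T y] by (metis diff_diff_cancel)
next
  case False
  then have "(par ^^ i) y = r \<or> (par ^^ j) y = r" using funpow_parent_eq_root[OF T y] by auto
  then show ?thesis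
    using eq depth_eq[OF T] depth_root funpow_parent_in[OF T y]
    by (metis nat.distinct(1))
qed

lemma downward_path_funpow_nth:
  assumes p: "downward_path N par p" and i: "i + k < length p"
  shows "(par ^^ k) (p ! (i + k)) = p ! i"
  using i
proof (induction k)
  case 0
  then show ?case by simp
next
  case (Suc k)
  have "par (p ! Suc (i + k)) = p ! (i + k)" using p Suc.prems unfolding downward_path_def by auto
  then show ?case using Suc by (simp add: funpow_Suc_right del: funpow.simps)
qed

lemma downward_path_depth_nth:
  assumes T: "rooted_tree N r par" and p: "downward_path N par p" and j: "j < length p"
  shows "depth r par (p ! j) = depth r par (hd p) + j"
  using j
proof (induction j)
  case 0
  then show ?case using p by (simp add: downward_path_def hd_conv_nth)
next
  case (Suc j)
  have step: "par (p ! Suc j) = p ! j" "p ! Suc j \<noteq> p ! j" "p ! Suc j \<in> N"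
    using p Suc.prems unfolding downward_path_def by auto
  then have "p ! Suc j \<noteq> r" using T by (auto simp: rooted_tree_def)
  then show ?case using depth_eq[OF T step(3)] step Suc by simp
qed

lemma depth_hd_le:
  "rooted_tree N r par \<Longrightarrow> downward_path N par p \<Longrightarrow> y \<in> set p \<Longrightarrow>
    depth r par (hd p) \<le> depth r par y"
  by (auto simp: in_set_conv_nth downward_path_depth_nth)

lemma ancestor_in_downward_path:
  assumes T: "rooted_tree N r par" and p: "downward_path N par p"
    and y: "y \<in> set p" and d: "depth r par (hd p) \<le> depth r par ((par ^^ k) y)"
  shows "(par ^^ k) y \<in> set p"
proof -
  obtain j where j: "j < length p" "y = p ! j" using y by (auto simp: in_set_conv_nth)
  have yN: "y \<in> N" using p y unfolding downward_path_def by auto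
  define i where "i = depth r par ((par ^^ k) y) - depth r par (hd p)"
  have dy: "depth r par y = depth r par (hd p) + j"
    using downward_path_depth_nth[OF T p j(1)] j by simp
  then have ij: "i \<le> j" using depth_funpow_parent[OF T yN, of k] by (simp add: i_def)
  have pi: "(par ^^ (j - i)) y = p ! i" using downward_path_funpow_nth[OF p, of i "j - i"] j ij by simp
  have "depth r par (p ! i) = depth r par ((par ^^ k) y)"
    using downward_path_depth_nth[OF T p, of i] j ij d by (simp add: i_def)
  then have "(par ^^ (j - i)) y = (par ^^ k) y" using ancestor_eq_if_depth_eq[OF T yN] pi by metis
  then show ?thesis using pi j ij by (metis nth_mem order.strict_trans1)
qed

lemma downward_path_nodes_comparable:
  assumes p: "downward_path N par p" and y: "y \<in> set p" and z: "z \<in> set p"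
  shows "(\<exists>k. (par ^^ k) y = z) \<or> (\<exists>k. (par ^^ k) z = y)"
proof -
  obtain i j where "i < length p" "y = p ! i" "j < length p" "z = p ! j"
    using y z by (auto simp: in_set_conv_nth)
  then show ?thesis
    using downward_path_funpow_nth[OF p, of i "j - i"] downward_path_funpow_nth[OF p, of j "i - j"]
    by (cases "i \<le> j") auto
qed

lemma hd_in_downward_path_if_meet:
  assumes T: "rooted_tree N r par" and p: "downward_path N par p" and q: "downward_path N par q"
    and meet: "set p \<inter> set q \<noteq> {}" and d: "depth r par (hd q) \<le> depth r par (hd p)"
  shows "hd p \<in> set q"
proof -
  obtain y where y: "y \<in> set p" "y \<in> set q" using meet by blast
  then obtain j where "j < length p" "y = p ! j" by (auto simp: in_set_conv_nth)
  then have "(par ^^ j) y = hd p"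
    using downward_path_funpow_nth[OF p, of 0 j] p by (simp add: downward_path_def hd_conv_nth)
  then show ?thesis using ancestor_in_downward_path[OF T q y(2), of j] d by simp
qed

text \<open>The deepest top \<open>hd pv\<close> lies on \<open>pu\<close> and \<open>pw\<close>; \<open>px\<close> meets \<open>pw\<close> either above it
  (then \<open>px\<close> reaches it) or below it (then \<open>pu\<close> reaches that meeting point).\<close>
lemma downward_paths_meet_exchange:
  assumes T: "rooted_tree N r par"
    and pv: "downward_path N par pv" and pu: "downward_path N par pu"
    and pw: "downward_path N par pw" and px: "downward_path N par px"
    and vu: "set pv \<inter> set pu \<noteq> {}" and vw: "set pv \<inter> set pw \<noteq> {}" and wx: "set pw \<inter> set px \<noteq> {}"
    and uw: "depth r par (hd pu) \<le> depth r par (hd pw)"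
    and wv: "depth r par (hd pw) \<le> depth r par (hd pv)"
    and xv: "depth r par (hd px) \<le> depth r par (hd pv)"
  shows "set pu \<inter> set px \<noteq> {}"
proof -
  have tu: "hd pv \<in> set pu" using hd_in_downward_path_if_meet[OF T pv pu vu] uw wv by simp
  have tw: "hd pv \<in> set pw" using hd_in_downward_path_if_meet[OF T pv pw vw] wv by simp
  obtain z where z: "z \<in> set pw" "z \<in> set px" using wx by blast
  from downward_path_nodes_comparable[OF pw tw z(1)] show ?thesis
  proof (elim disjE exE)
    fix k assume k: "(par ^^ k) (hd pv) = z"
    have "depth r par (hd pu) \<le> depth r par z" using uw depth_hd_le[OF T pw z(1)] by simp
    then have "z \<in> set pu" using ancestor_in_downward_path[OF T pu tu, of k] k by simp
    then show ?thesis using z by blast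
  next
    fix k assume k: "(par ^^ k) z = hd pv"
    have "hd pv \<in> set px" using ancestor_in_downward_path[OF T px z(2), of k] k xv by simp
    then show ?thesis using tu by blast
  qed
qed

lemma is_matchingI:
  assumes "\<And>e. e \<in> M \<Longrightarrow> \<exists>u v. e = {u, v} \<and> u \<in> V \<and> v \<in> V \<and> u \<noteq> v \<and> adj u v"
    and "\<And>e1 e2. e1 \<in> M \<Longrightarrow> e2 \<in> M \<Longrightarrow> e1 \<noteq> e2 \<Longrightarrow> e1 \<inter> e2 = {}"
  shows "is_matching V adj M"
  using assms unfolding is_matching_def by blast

lemma is_matching_edgeD:
  "is_matching V adj M \<Longrightarrow> e \<in> M \<Longrightarrow> \<exists>u v. e = {u, v} \<and> u \<in> V \<and> v \<in> V \<and> u \<noteq> v \<and> adj u v"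
  unfolding is_matching_def by blast

lemma is_matching_disjointD:
  "is_matching V adj M \<Longrightarrow> e1 \<in> M \<Longrightarrow> e2 \<in> M \<Longrightarrow> e1 \<noteq> e2 \<Longrightarrow> e1 \<inter> e2 = {}"
  unfolding is_matching_def by blast

lemma is_matching_edge_eq:
  "is_matching V adj M \<Longrightarrow> e1 \<in> M \<Longrightarrow> e2 \<in> M \<Longrightarrow> a \<in> e1 \<Longrightarrow> a \<in> e2 \<Longrightarrow> e1 = e2"
  using is_matching_disjointD by blast

lemma is_matching_empty: "is_matching V adj {}"
  by (simp add: is_matching_def)

lemma is_matching_insert:
  assumes M: "is_matching V adj M" and ab: "adj a b" "a \<in> V" "b \<in> V" "a \<noteq> b"
    and free: "{a, b} \<inter> \<Union>M = {}"
  shows "is_matching V adj (insert {a, b} M)"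
proof (rule is_matchingI)
  show "\<exists>u v. e = {u, v} \<and> u \<in> V \<and> v \<in> V \<and> u \<noteq> v \<and> adj u v" if "e \<in> insert {a, b} M" for e
    using that ab is_matching_edgeD[OF M] by blast
  show "e1 \<inter> e2 = {}" if "e1 \<in> insert {a, b} M" "e2 \<in> insert {a, b} M" "e1 \<noteq> e2" for e1 e2
    using that free is_matching_disjointD[OF M] by blast
qed

lemma is_matching_partner:
  assumes sym: "\<forall>u v. adj u v \<longrightarrow> adj v u"
    and M: "is_matching V adj M" and e: "e \<in> M" and a: "a \<in> e"
  shows "\<exists>b. e = {a, b} \<and> adj a b"
proof -
  obtain x y where xy: "e = {x, y}" "adj x y" using is_matching_edgeD[OF M e] by blast
  show ?thesis
  proof (cases "a = x")
    case True
    then show ?thesis using xy by blast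
  next
    case False
    then have "e = {a, x}" "adj a x" using xy a sym by auto
    then show ?thesis by blast
  qed
qed

lemma is_matching_finite:
  assumes "finite V" "is_matching V adj M"
  shows "finite M"
proof (rule finite_subset)
  show "M \<subseteq> Pow V" using is_matching_edgeD[OF assms(2)] by blast
qed (use assms(1) in simp)

lemma max_matching_exists:
  assumes "finite V"
  shows "\<exists>M. is_max_matching V adj M"
proof -
  define S where "S = {M. is_matching V adj M}"
  have "S \<subseteq> Pow (Pow V)" using is_matching_edgeD unfolding S_def by blast
  then have fin: "finite (card ` S)" using assms by (meson finite_Pow_iff finite_subset finite_imageI)
  have "card ` S \<noteq> {}" using is_matching_empty unfolding S_def by blast
  then obtain M where M: "M \<in> S" "card M = Max (card ` S)" using Max_in[OF fin] by (metis imageE)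
  have "card M' \<le> card M" if "is_matching V adj M'" for M'
  proof -
    have "card M' \<in> card ` S" using that unfolding S_def by simp
    then show ?thesis using Max_ge[OF fin] M(2) by simp
  qed
  then show ?thesis using M(1) unfolding is_max_matching_def S_def by blast
qed

lemma max_matching_exchange:
  assumes V: "finite V" and Ms: "is_max_matching V adj Ms" and E: "E \<subseteq> Ms"
    and F: "is_matching V adj F" and card: "card E \<le> card F"
    and avoid: "\<forall>g\<in>Ms - E. g \<inter> \<Union>F = {}"
  shows "is_max_matching V adj ((Ms - E) \<union> F)"
proof -
  have mMs: "is_matching V adj Ms" using Ms by (simp add: is_max_matching_def)
  have "is_matching V adj ((Ms - E) \<union> F)"
  proof (rule is_matchingI)
    show "\<exists>u v. e = {u, v} \<and> u \<in> V \<and> v \<in> V \<and> u \<noteq> v \<and> adj u v" if "e \<in> (Ms - E) \<union> F" for e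
      using that is_matching_edgeD[OF mMs] is_matching_edgeD[OF F] by blast
    show "e1 \<inter> e2 = {}" if "e1 \<in> (Ms - E) \<union> F" "e2 \<in> (Ms - E) \<union> F" "e1 \<noteq> e2" for e1 e2
      using that avoid is_matching_disjointD[OF mMs, of e1 e2] is_matching_disjointD[OF F, of e1 e2]
      by (cases "e1 \<in> F"; cases "e2 \<in> F") auto
  qed
  moreover have "(Ms - E) \<inter> F = {}"
  proof (rule ccontr)
    assume "(Ms - E) \<inter> F \<noteq> {}"
    then obtain f where "f \<in> Ms - E" "f \<in> F" by blast
    moreover obtain a where "a \<in> f" using is_matching_edgeD[OF F \<open>f \<in> F\<close>] by blast
    ultimately show False using avoid by blast
  qed
  then have "card ((Ms - E) \<union> F) = card Ms - card E + card F"
    using is_matching_finite[OF V] mMs F E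
    by (simp add: card_Un_disjoint card_Diff_subset finite_subset)
  then have "card Ms \<le> card ((Ms - E) \<union> F)"
    using card card_mono[OF is_matching_finite[OF V mMs] E] by simp
  ultimately show ?thesis using Ms unfolding is_max_matching_def by (meson le_trans)
qed

locale rdv_greedy =
  fixes V :: "'a set" and adj :: "'a \<Rightarrow> 'a \<Rightarrow> bool"
    and N :: "'n set" and r :: 'n and par :: "'n \<Rightarrow> 'n"
    and P :: "'a \<Rightarrow> 'n list" and vs :: "'a list"
  assumes finite_V: "finite V"
    and adj_sym: "\<forall>u v. adj u v \<longrightarrow> adj v u"
    and adj_in_V: "\<forall>u v. adj u v \<longrightarrow> u \<in> V \<and> v \<in> V \<and> u \<noteq> v"
    and rdv: "rdv_rep V adj N r par P"
    and bottom_up: "bottom_up_enum V r par P vs"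
begin

abbreviation top_depth :: "'a \<Rightarrow> nat" where
  "top_depth a \<equiv> depth r par (hd (P a))"

lemma set_vs: "set vs = V" and distinct_vs: "distinct vs"
  using bottom_up by (auto simp: bottom_up_enum_def)

lemma adj_exchange:
  assumes "adj v u" "adj v w" "adj w x" "u \<noteq> x"
    and "top_depth u \<le> top_depth w" "top_depth w \<le> top_depth v" "top_depth x \<le> top_depth v"
  shows "adj u x"
proof -
  have V: "v \<in> V" "u \<in> V" "w \<in> V" "x \<in> V" "v \<noteq> u" "v \<noteq> w" "w \<noteq> x"
    using assms adj_in_V by auto
  have T: "rooted_tree N r par" and path: "\<And>a. a \<in> V \<Longrightarrow> downward_path N par (P a)"
    and meet: "\<And>a b. a \<in> V \<Longrightarrow> b \<in> V \<Longrightarrow> a \<noteq> b \<Longrightarrow> adj a b \<longleftrightarrow> set (P a) \<inter> set (P b) \<noteq> {}"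
    using rdv unfolding rdv_rep_def by auto
  show ?thesis
    using downward_paths_meet_exchange[OF T path[OF V(1)] path[OF V(2)] path[OF V(3)] path[OF V(4)]]
      meet V assms by auto
qed

lemma top_depth_antimono:
  assumes "i \<le> j" "j < length vs"
  shows "top_depth (vs ! j) \<le> top_depth (vs ! i)"
  using bottom_up assms unfolding bottom_up_enum_def by (cases "i = j") auto

lemma top_depth_le_if_unprocessed:
  assumes split: "vs = pre @ v # rest" and a: "a \<in> V" "a \<notin> set pre"
  shows "top_depth a \<le> top_depth v"
proof -
  have "a \<in> set (v # rest)" using a split set_vs by auto
  then obtain k where "k < length (v # rest)" "a = (v # rest) ! k" by (metis in_set_conv_nth)
  then show ?thesis
    using top_depth_antimono[of "length pre" "length pre + k"] split by (simp add: nth_append)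
qed

lemma top_depth_le_find:
  assumes found: "find Q vs = Some w" and u: "Q u" "u \<in> V"
  shows "top_depth u \<le> top_depth w"
proof -
  obtain i where i: "i < length vs" "w = vs ! i" "\<forall>j<i. \<not> Q (vs ! j)"
    using found by (auto simp: find_Some_iff)
  obtain j where j: "j < length vs" "u = vs ! j" using u(2) set_vs by (auto simp: in_set_conv_nth)
  then have "i \<le> j" using i(3) u(1) by (meson not_le)
  then show ?thesis using top_depth_antimono j i by simp
qed

definition greedy_invariant :: "'a list \<Rightarrow> 'a set set \<Rightarrow> bool" where
  "greedy_invariant pre M \<longleftrightarrow>
     (\<exists>Ms. is_max_matching V adj Ms \<and> M \<subseteq> Ms \<and> (\<forall>e\<in>Ms. e \<inter> set pre \<noteq> {} \<longrightarrow> e \<in> M)) \<and>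
     (\<forall>a\<in>set pre. a \<notin> \<Union>M \<longrightarrow> (\<forall>b. adj a b \<longrightarrow> b \<in> \<Union>M))"

lemma greedy_invariant_Nil: "greedy_invariant [] {}"
  using max_matching_exists[OF finite_V] unfolding greedy_invariant_def by auto

lemma max_matching_if_greedy_invariant:
  assumes "greedy_invariant vs M"
  shows "is_max_matching V adj M"
proof -
  obtain Ms where Ms: "is_max_matching V adj Ms" "M \<subseteq> Ms"
    and agree: "\<forall>e\<in>Ms. e \<inter> set vs \<noteq> {} \<longrightarrow> e \<in> M"
    using assms unfolding greedy_invariant_def by blast
  have "Ms \<subseteq> M"
  proof
    fix e assume e: "e \<in> Ms"
    then obtain u w where "e = {u, w}" "u \<in> V"
      using is_matching_edgeD Ms(1) unfolding is_max_matching_def by blast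
    then show "e \<in> M" using agree e set_vs by auto
  qed
  then show ?thesis using Ms by (metis subset_antisym)
qed

lemma greedy_invariant_matched:
  assumes inv: "greedy_invariant pre M" and v: "v \<in> \<Union>M"
  shows "greedy_invariant (pre @ [v]) M"
proof -
  obtain Ms where Ms: "is_max_matching V adj Ms" "M \<subseteq> Ms"
    and agree: "\<forall>e\<in>Ms. e \<inter> set pre \<noteq> {} \<longrightarrow> e \<in> M"
    using inv unfolding greedy_invariant_def by blast
  obtain g where g: "g \<in> M" "v \<in> g" using v by blast
  have "e \<in> M" if "e \<in> Ms" "v \<in> e" for e
    using is_matching_edge_eq[of V adj Ms e g v] Ms that g by (auto simp: is_max_matching_def)
  then have "\<forall>e\<in>Ms. e \<inter> set (pre @ [v]) \<noteq> {} \<longrightarrow> e \<in> M" using agree by auto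
  then show ?thesis using inv Ms v unfolding greedy_invariant_def by auto
qed

lemma greedy_invariant_unmatchable:
  assumes inv: "greedy_invariant pre M" and v: "v \<notin> \<Union>M"
    and nbrs: "\<forall>b. adj v b \<longrightarrow> b \<in> \<Union>M"
  shows "greedy_invariant (pre @ [v]) M"
proof -
  obtain Ms where Ms: "is_max_matching V adj Ms" "M \<subseteq> Ms"
    and agree: "\<forall>e\<in>Ms. e \<inter> set pre \<noteq> {} \<longrightarrow> e \<in> M"
    using inv unfolding greedy_invariant_def by blast
  have mMs: "is_matching V adj Ms" using Ms(1) by (simp add: is_max_matching_def)
  have "v \<notin> e" if e: "e \<in> Ms" for e
  proof
    assume "v \<in> e"
    then obtain c where c: "e = {v, c}" "adj v c" using is_matching_partner[OF adj_sym mMs e] by blast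
    then obtain g where g: "g \<in> M" "c \<in> g" using nbrs by blast
    then have "g = e" using is_matching_edge_eq[OF mMs _ e, of g c] Ms(2) c by blast
    then show False using v g \<open>v \<in> e\<close> by blast
  qed
  then have "\<forall>e\<in>Ms. e \<inter> set (pre @ [v]) \<noteq> {} \<longrightarrow> e \<in> M" using agree by auto
  then show ?thesis using inv Ms v nbrs unfolding greedy_invariant_def by auto
qed

context
  fixes pre v rest M Ms w
  assumes split: "vs = pre @ v # rest"
    and Ms: "is_max_matching V adj Ms" and M_sub: "M \<subseteq> Ms"
    and agree: "\<forall>e\<in>Ms. e \<inter> set pre \<noteq> {} \<longrightarrow> e \<in> M"
    and unmatched: "\<forall>a\<in>set pre. a \<notin> \<Union>M \<longrightarrow> (\<forall>b. adj a b \<longrightarrow> b \<in> \<Union>M)"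
    and v_free: "v \<notin> \<Union>M"
    and found: "find (\<lambda>w. w \<noteq> v \<and> adj v w \<and> w \<notin> \<Union>M) vs = Some w"
begin

lemma matching_Ms: "is_matching V adj Ms"
  using Ms by (simp add: is_max_matching_def)

lemma found_partner: "w \<noteq> v" "adj v w" "w \<notin> \<Union>M"
  using found by (auto simp: find_Some_iff)

lemma unprocessed: "v \<notin> set pre" "w \<notin> set pre"
proof -
  show "v \<notin> set pre" using split distinct_vs by simp
  show "w \<notin> set pre" using unmatched found_partner v_free adj_sym by blast
qed

lemma greedy_invariant_exchange:
  assumes E: "E \<subseteq> Ms - M" and F: "is_matching V adj F" "{v, w} \<in> F" "card E \<le> card F"
    and avoid: "\<forall>g\<in>Ms - E. g \<inter> \<Union>F = {}" and fresh: "\<Union>F \<inter> set pre = {}"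
  shows "greedy_invariant (pre @ [v]) (insert {v, w} M)"
proof -
  let ?Ms' = "(Ms - E) \<union> F"
  have "is_max_matching V adj ?Ms'"
    using max_matching_exchange[OF finite_V Ms _ F(1,3) avoid] E by blast
  moreover have "insert {v, w} M \<subseteq> ?Ms'" using M_sub E F by blast
  moreover have "e \<in> insert {v, w} M" if e: "e \<in> ?Ms'" "e \<inter> set (pre @ [v]) \<noteq> {}" for e
  proof (cases "e \<in> F")
    case True
    then have "v \<in> e" using e fresh by auto
    then show ?thesis using is_matching_edge_eq[OF F(1) True F(2)] by simp
  next
    case False
    then have "v \<notin> e" using e avoid F(2) by blast
    then show ?thesis using e False agree by auto
  qed
  ultimately show ?thesis using unmatched unfolding greedy_invariant_def by auto
qed

lemma edges_at_partner_not_in_M: "{g \<in> Ms. v \<in> g \<or> w \<in> g} \<subseteq> Ms - M"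
  using v_free found_partner(3) by blast

lemma greedy_invariant_add_edge_replace:
  assumes single: "\<not> (\<exists>f\<in>Ms. \<exists>e\<in>Ms. v \<in> f \<and> w \<in> e \<and> f \<noteq> e)"
  shows "greedy_invariant (pre @ [v]) (insert {v, w} M)"
proof -
  define E where "E = {g \<in> Ms. v \<in> g \<or> w \<in> g}"
  have "finite E" using is_matching_finite[OF finite_V matching_Ms] unfolding E_def by simp
  moreover have "\<forall>g1\<in>E. \<forall>g2\<in>E. g1 = g2"
    using single is_matching_edge_eq[OF matching_Ms] unfolding E_def by blast
  ultimately have "card E \<le> card {{v, w}}" by (simp add: card_le_Suc0_iff_eq)
  moreover have "is_matching V adj {{v, w}}"
    using found_partner(2) adj_in_V by (intro is_matching_insert is_matching_empty) auto
  ultimately show ?thesis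
    using greedy_invariant_exchange[of E "{{v, w}}"] edges_at_partner_not_in_M unprocessed
    unfolding E_def by auto
qed

text \<open>\<open>u\<close> is a free neighbour of \<open>v\<close> that \<open>find\<close> did not reach before \<open>w\<close>, and \<open>w\<close>, \<open>x\<close>
  are unprocessed; this orders the top depths as \<open>adj_exchange\<close> needs.\<close>
lemma greedy_invariant_add_edge_swap:
  assumes f: "f \<in> Ms" "v \<in> f" and e: "e \<in> Ms" "w \<in> e" and fe: "f \<noteq> e"
  shows "greedy_invariant (pre @ [v]) (insert {v, w} M)"
proof -
  obtain u where u: "f = {v, u}" "adj v u" using is_matching_partner[OF adj_sym matching_Ms f] by blast
  obtain x where x: "e = {w, x}" "adj w x" using is_matching_partner[OF adj_sym matching_Ms e] by blast
  have at_f: "g = f" if "g \<in> Ms" "v \<in> g \<or> u \<in> g" for g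
    using that is_matching_edge_eq[OF matching_Ms _ f(1)] u(1) by blast
  have at_e: "g = e" if "g \<in> Ms" "w \<in> g \<or> x \<in> g" for g
    using that is_matching_edge_eq[OF matching_Ms _ e(1)] x(1) by blast
  have E: "{g \<in> Ms. v \<in> g \<or> w \<in> g} = {f, e}" using at_f at_e f e by blast
  then have fe_free: "f \<notin> M" "e \<notin> M" using edges_at_partner_not_in_M by auto
  have distinct: "u \<noteq> v" "u \<noteq> w" "u \<noteq> x" "x \<noteq> v" "x \<noteq> w"
    using at_f[OF e(1)] at_e[OF f(1)] fe u x adj_in_V by auto
  have u_free: "u \<notin> \<Union>M" using at_f M_sub fe_free(1) by blast
  have pre_free: "u \<notin> set pre" "x \<notin> set pre"
    using agree f(1) e(1) fe_free u(1) x(1) by auto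
  have in_V: "w \<in> V" "x \<in> V" "u \<in> V" using x(2) u(2) adj_in_V by auto
  have "adj u x"
  proof (rule adj_exchange[OF u(2) found_partner(2) x(2) distinct(3)])
    show "top_depth u \<le> top_depth w"
      using top_depth_le_find[OF found] u(2) u_free distinct(1) in_V(3) by simp
    show "top_depth w \<le> top_depth v" "top_depth x \<le> top_depth v"
      using top_depth_le_if_unprocessed[OF split] in_V unprocessed(2) pre_free(2) by auto
  qed
  then have "is_matching V adj {{v, w}, {u, x}}"
    using found_partner(2) distinct adj_in_V by (intro is_matching_insert is_matching_empty) auto
  moreover have "card {f, e} \<le> card {{v, w}, {u, x}}"
    using fe distinct by (auto simp: doubleton_eq_iff)
  moreover have "\<forall>g\<in>Ms - {f, e}. g \<inter> \<Union>{{v, w}, {u, x}} = {}"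
    using at_f at_e by blast
  ultimately show ?thesis
    using greedy_invariant_exchange[of "{f, e}" "{{v, w}, {u, x}}"] edges_at_partner_not_in_M E
      unprocessed pre_free by auto
qed

end

lemma greedy_invariant_add_edge:
  assumes inv: "greedy_invariant pre M" and split: "vs = pre @ v # rest" and v: "v \<notin> \<Union>M"
    and found: "find (\<lambda>w. w \<noteq> v \<and> adj v w \<and> w \<notin> \<Union>M) vs = Some w"
  shows "greedy_invariant (pre @ [v]) (insert {v, w} M)"
proof -
  obtain Ms where Ms: "is_max_matching V adj Ms" "M \<subseteq> Ms"
    and agree: "\<forall>e\<in>Ms. e \<inter> set pre \<noteq> {} \<longrightarrow> e \<in> M"
    and unmatched: "\<forall>a\<in>set pre. a \<notin> \<Union>M \<longrightarrow> (\<forall>b. adj a b \<longrightarrow> b \<in> \<Union>M)"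
    using inv unfolding greedy_invariant_def by blast
  note add_edge = split Ms agree unmatched v found
  show ?thesis
  proof (cases "\<exists>f\<in>Ms. \<exists>e\<in>Ms. v \<in> f \<and> w \<in> e \<and> f \<noteq> e")
    case True
    then show ?thesis using greedy_invariant_add_edge_swap[OF add_edge] by blast
  next
    case False
    then show ?thesis by (rule greedy_invariant_add_edge_replace[OF add_edge])
  qed
qed

lemma greedy_invariant_step:
  assumes inv: "greedy_invariant pre M" and split: "vs = pre @ v # rest"
  shows "greedy_invariant (pre @ [v])
    (if v \<in> \<Union>M then M
     else (case find (\<lambda>w. w \<noteq> v \<and> adj v w \<and> w \<notin> \<Union>M) vs of
             None \<Rightarrow> M
           | Some w \<Rightarrow> insert {v, w} M))"
proof (cases "find (\<lambda>w. w \<noteq> v \<and> adj v w \<and> w \<notin> \<Union>M) vs")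
  case None
  then have "\<forall>b. adj v b \<longrightarrow> b \<in> \<Union>M"
    using adj_in_V set_vs unfolding find_None_iff by blast
  then show ?thesis
    using None greedy_invariant_matched[OF inv] greedy_invariant_unmatchable[OF inv] by auto
next
  case (Some w)
  then show ?thesis
    using greedy_invariant_matched[OF inv] greedy_invariant_add_edge[OF inv split] by auto
qed

lemma greedy_aux_invariant:
  "vs = pre @ rest \<Longrightarrow> greedy_invariant pre M \<Longrightarrow> greedy_invariant vs (greedy_aux adj vs rest M)"
proof (induction rest arbitrary: pre M)
  case Nil
  then show ?case by simp
next
  case (Cons v rest)
  have "vs = (pre @ [v]) @ rest" using Cons.prems(1) by simp
  from Cons.IH[OF this greedy_invariant_step[OF Cons.prems(2,1)]] show ?case by simp
qed

end

theorem theorem1: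
  fixes V :: "'a set" and adj :: "'a \<Rightarrow> 'a \<Rightarrow> bool"
    and N :: "'n set" and r :: 'n and par :: "'n \<Rightarrow> 'n"
    and P :: "'a \<Rightarrow> 'n list" and vs :: "'a list"
  assumes "finite V"
    and "\<forall>u v. adj u v \<longrightarrow> adj v u"
    and "\<forall>u v. adj u v \<longrightarrow> u \<in> V \<and> v \<in> V \<and> u \<noteq> v"
    and "rdv_rep V adj N r par P"
    and "bottom_up_enum V r par P vs"
  shows "is_max_matching V adj (greedy_matching adj vs)"
proof -
  interpret rdv_greedy V adj N r par P vs using assms by unfold_locales
  show ?thesis
    unfolding greedy_matching_def
    using greedy_aux_invariant[of "[]" vs "{}"] greedy_invariant_Nil max_matching_if_greedy_invariant
    by simp
qed

end
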